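(* The space $(\mathbb{R}^{\mathbb{Z}_<},\tau_\iota)$ is not connected, and it is a Hausdorff space.
   Context: $\mathbb{R}^{\mathbb{Z}_<}$ is the set of formal series $\sum_{i\ge -k}a_i\epsilon^i$ ($k\in\mathbb{N}\cup\{0\}$, $a_i\in\mathbb{R}$), written $\langle a_{-k},\dots,\widehat{a_0},a_1,\dots\rangle$, with coefficientwise addition, Cauchy-product multiplication and lexicographic order; $|\cdot|$ is the associated absolute value, $d(\mathbf{x},\mathbf{y})=|\mathbf{y}-\mathbf{x}|$, $B_{\mathbf{x}}(\mathbf{y})=\{\mathbf{z}:d(\mathbf{x},\mathbf{z})<\mathbf{y}\}$. For $m\in\mathbb{N}\cup\{0\}$ let $\Delta^m=\{a\epsilon^m: a\in\mathbb{R}\}$ (with $a\neq 0$ when $m\ge1$) and $\Delta^{\downarrow m}=\bigcup_{n\ge m}\Delta^n$. A set $O$ is $\iota$-open iff for every $\mathbf{x}\in O$ there is a positive $\iota\in\Delta^{\downarrow m}$ (for some $m$) with $B_{\mathbf{x}}(\iota)\subseteq O$; $\tau_\iota$ is the topology generated by unions of such $\iota$-balls. *)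

theory Defs
  imports "HOL-Analysis.Analysis" "HOL-Computational_Algebra.Formal_Laurent_Series"
begin

text \<open>The field R^{Z_<} is modelled by real formal Laurent series (finitely many
  negative-index coefficients), type real fls; the formal variable fls_X plays the role of epsilon.\<close>

type_synonym lc = "real fls"

definition lc_pos :: "lc \<Rightarrow> bool" where
  "lc_pos x \<longleftrightarrow> x \<noteq> 0 \<and> fls_nth x (fls_subdegree x) > 0"

definition lc_less :: "lc \<Rightarrow> lc \<Rightarrow> bool" where
  "lc_less x y \<longleftrightarrow> lc_pos (y - x)"

definition lc_abs :: "lc \<Rightarrow> lc" where
  "lc_abs x = (if lc_pos x \<or> x = 0 then x else - x)"

definition lc_dist :: "lc \<Rightarrow> lc \<Rightarrow> lc" where
  "lc_dist x y = lc_abs (y - x)"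

definition lc_ball :: "lc \<Rightarrow> lc \<Rightarrow> lc set" where
  "lc_ball x r = {z. lc_less (lc_dist x z) r}"

definition lc_Delta :: "nat \<Rightarrow> lc set" where
  "lc_Delta m = {fls_const a * fls_X ^ m | a. m \<ge> 1 \<longrightarrow> a \<noteq> 0}"

definition lc_Delta_down :: "nat \<Rightarrow> lc set" where
  "lc_Delta_down m = (\<Union>n\<in>{m..}. lc_Delta n)"

definition iota_balls :: "lc set set" where
  "iota_balls = {lc_ball x i | x i m. lc_pos i \<and> i \<in> lc_Delta_down m}"

definition tau_iota :: "lc topology" where
  "tau_iota = topology_generated_by iota_balls"

end

theory Submission
  imports Defs
begin

text \<open>A series d with |d| < \<epsilon>^n has vanishing coefficients below index n, so the
  \<iota>-ball of radius \<epsilon>^n around x consists of series agreeing with x below n. Hence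
  every coefficient map is locally constant and its fibres are clopen: the fibres of the
  \<epsilon>^(-1) coefficient disconnect the space, and two distinct points are separated by
  the fibres of a coefficient in which they differ.\<close>

lemma lc_pos_lc_abs:
  assumes "d \<noteq> 0"
  shows "lc_pos (lc_abs d)"
proof (cases "lc_pos d")
  case True
  then show ?thesis by (simp add: lc_abs_def)
next
  case False
  have "fls_nth d (fls_subdegree d) \<noteq> 0" using assms by simp
  with False assms have "fls_nth d (fls_subdegree d) < 0"
    unfolding lc_pos_def by linarith
  with False assms show ?thesis unfolding lc_abs_def lc_pos_def by simp
qed

lemma fls_nth_lc_abs_eq_0_iff: "fls_nth (lc_abs d) j = 0 \<longleftrightarrow> fls_nth d j = 0"
  unfolding lc_abs_def by auto

lemma fls_nth_eq_0_if_lc_abs_less_X_power: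
  assumes "lc_less (lc_abs d) (fls_X ^ n)" and "j < int n"
  shows "fls_nth d j = 0"
proof (rule ccontr)
  assume dj: "fls_nth d j \<noteq> 0"
  define e where "e = lc_abs d"
  define s where "s = fls_subdegree e"
  have "d \<noteq> 0" using dj by auto
  then have "lc_pos e" unfolding e_def by (rule lc_pos_lc_abs)
  then have e_s: "fls_nth e s > 0" unfolding lc_pos_def s_def by simp
  have "fls_nth e j \<noteq> 0" using dj fls_nth_lc_abs_eq_0_iff e_def by simp
  then have "s \<le> j" unfolding s_def by (rule fls_subdegree_leI)
  with assms(2) have "s < int n" by simp
  define f where "f = fls_X ^ n - e"
  have f_s: "fls_nth f s = - fls_nth e s" unfolding f_def using \<open>s < int n\<close> by simp
  have "fls_nth f k = 0" if "k < s" for k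
    unfolding f_def using that \<open>s < int n\<close> s_def by simp
  with f_s e_s have "fls_subdegree f = s" by (intro fls_subdegree_eqI) auto
  moreover have "lc_pos f" using assms(1) unfolding f_def e_def lc_less_def .
  ultimately show False using f_s e_s unfolding lc_pos_def by simp
qed

lemma lc_pos_X_power: "lc_pos (fls_X ^ n)"
  unfolding lc_pos_def by simp

lemma X_power_in_lc_Delta_down: "fls_X ^ n \<in> lc_Delta_down n"
  unfolding lc_Delta_down_def lc_Delta_def by (auto intro!: bexI[of _ n] exI[of _ 1])

lemma openin_lc_ball_X_power: "openin tau_iota (lc_ball x (fls_X ^ n))"
  unfolding tau_iota_def openin_topology_generated_by_iff iota_balls_def
  using lc_pos_X_power X_power_in_lc_Delta_down by (blast intro: generate_topology_on.Basis)

lemma centre_in_lc_ball_X_power: "x \<in> lc_ball x (fls_X ^ n)"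
  unfolding lc_ball_def lc_dist_def lc_less_def lc_abs_def using lc_pos_X_power by simp

lemma fls_nth_in_lc_ball_X_power:
  assumes "z \<in> lc_ball x (fls_X ^ n)" and "j < int n"
  shows "fls_nth z j = fls_nth x j"
proof -
  have "fls_nth (z - x) j = 0"
    using assms fls_nth_eq_0_if_lc_abs_less_X_power unfolding lc_ball_def lc_dist_def by blast
  then show ?thesis by simp
qed

lemma openin_tau_iota_fls_nth_preimage: "openin tau_iota {z. fls_nth z k \<in> A}"
proof (subst openin_subopen, intro ballI)
  fix x assume x: "x \<in> {z. fls_nth z k \<in> A}"
  define n where "n = nat (k + 1)"
  have "k < int n" unfolding n_def by simp
  then have "lc_ball x (fls_X ^ n) \<subseteq> {z. fls_nth z k \<in> A}"
    using x fls_nth_in_lc_ball_X_power by auto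
  then show "\<exists>T. openin tau_iota T \<and> x \<in> T \<and> T \<subseteq> {z. fls_nth z k \<in> A}"
    using openin_lc_ball_X_power centre_in_lc_ball_X_power by blast
qed

theorem mainTheorem3:
  shows "\<not> connected_space tau_iota \<and> Hausdorff_space tau_iota"
proof
  define U where "U = {z::lc. fls_nth z (-1) \<in> {0}}"
  have "- U = {z. fls_nth z (-1) \<in> - {0}}" unfolding U_def by auto
  then have "openin tau_iota U" "openin tau_iota (- U)"
    unfolding U_def by (simp_all only: openin_tau_iota_fls_nth_preimage)
  moreover have "0 \<in> U" "fls_X_inv \<in> - U" unfolding U_def by simp_all
  ultimately show "\<not> connected_space tau_iota"
    unfolding connected_space_def by blast
next
  show "Hausdorff_space tau_iota"
    unfolding Hausdorff_space_def
  proof (intro allI impI)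
    fix x y :: lc
    assume "x \<in> topspace tau_iota \<and> y \<in> topspace tau_iota \<and> x \<noteq> y"
    then obtain k where k: "fls_nth x k \<noteq> fls_nth y k" by (metis fls_eqI)
    let ?U = "{z. fls_nth z k \<in> {fls_nth x k}}"
    let ?V = "{z. fls_nth z k \<in> - {fls_nth x k}}"
    have "openin tau_iota ?U" "openin tau_iota ?V"
      by (rule openin_tau_iota_fls_nth_preimage)+
    moreover have "x \<in> ?U" "y \<in> ?V" "disjnt ?U ?V" using k by (auto simp: disjnt_def)
    ultimately show "\<exists>U V. openin tau_iota U \<and> openin tau_iota V \<and> x \<in> U \<and> y \<in> V \<and> disjnt U V"
      by blast
  qed
qed

end
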